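(* Let $G$ be an infinite, connected, locally finite graph, let $S$ be a finite resolving set of $G$, and let $\mathcal P$ be a set of metric rays of $G$ whose vertex sets are pairwise disjoint. For each $P\in\mathcal P$ with ordered vertex set $\{u_0,u_1,\dots\}$, let $u^P$ denote the vertex $u_{i(P,S)}$ of $P$. Then $S$ doubly resolves the set $\{u^P: P\in\mathcal P\}$.
   Context: $d$ denotes shortest-path distance in $G$. A vertex $x$ resolves $u,v$ if $d(u,x)\ne d(v,x)$; $S$ is a resolving set if every pair of distinct vertices is resolved by some vertex of $S$. For a finite ordered set $S=\{x_1,\dots,x_n\}$, $r(u\mid S)=(d(u,x_1),\dots,d(u,x_n))$. A metric ray of $G$ with endpoint $u_0$ is an infinite subgraph $P$ whose vertices admit an ordering $u_0,u_1,u_2,\dots$ (all distinct) with $u_k$ adjacent to $u_{k+1}$ in $P$ and $d_G(u_0,u_k)=k$ for all $k\ge 0$. For a finite set $S$ and a metric ray $P$, $i(P,S)$ is the minimum integer $i_0\ge0$ such that $r(u_{i_0+k}\mid S)=r(u_{i_0}\mid S)+(k,\dots,k)$ for every $k\ge 0$ (such an $i_0$ always exists). Two vertices $x,y$ doubly resolve a pair $u,v$ if $d(u,x)-d(v,x)\ne d(u,y)-d(v,y)$; $S$ doubly resolves a set $U$ if every pair of distinct vertices of $U$ is doubly resolved by some two vertices of $S$. *)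

theory Defs
  imports Main
begin

definition graph :: "'a set \<Rightarrow> ('a \<Rightarrow> 'a \<Rightarrow> bool) \<Rightarrow> bool" where
  "graph V E \<longleftrightarrow> (\<forall>x y. E x y \<longrightarrow> x \<in> V \<and> y \<in> V \<and> E y x \<and> x \<noteq> y)"

definition connected_graph :: "'a set \<Rightarrow> ('a \<Rightarrow> 'a \<Rightarrow> bool) \<Rightarrow> bool" where
  "connected_graph V E \<longleftrightarrow> (\<forall>x\<in>V. \<forall>y\<in>V. \<exists>n. (E ^^ n) x y)"

definition locally_finite :: "'a set \<Rightarrow> ('a \<Rightarrow> 'a \<Rightarrow> bool) \<Rightarrow> bool" where
  "locally_finite V E \<longleftrightarrow> (\<forall>v\<in>V. finite {w. E v w})"

definition gdist :: "('a \<Rightarrow> 'a \<Rightarrow> bool) \<Rightarrow> 'a \<Rightarrow> 'a \<Rightarrow> nat" where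
  "gdist E x y = (LEAST n. (E ^^ n) x y)"

definition resolving_set :: "'a set \<Rightarrow> ('a \<Rightarrow> 'a \<Rightarrow> bool) \<Rightarrow> 'a set \<Rightarrow> bool" where
  "resolving_set V E S \<longleftrightarrow> S \<subseteq> V \<and>
     (\<forall>u\<in>V. \<forall>v\<in>V. u \<noteq> v \<longrightarrow> (\<exists>x\<in>S. gdist E u x \<noteq> gdist E v x))"

definition metric_ray :: "('a \<Rightarrow> 'a \<Rightarrow> bool) \<Rightarrow> (nat \<Rightarrow> 'a) \<Rightarrow> bool" where
  "metric_ray E u \<longleftrightarrow> inj u \<and> (\<forall>k. E (u k) (u (Suc k))) \<and> (\<forall>k. gdist E (u 0) (u k) = k)"

definition ray_index :: "('a \<Rightarrow> 'a \<Rightarrow> bool) \<Rightarrow> (nat \<Rightarrow> 'a) \<Rightarrow> 'a set \<Rightarrow> nat" where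
  "ray_index E u S = (LEAST i0. \<forall>k. \<forall>x\<in>S. gdist E (u (i0 + k)) x = gdist E (u i0) x + k)"

definition doubly_resolves :: "('a \<Rightarrow> 'a \<Rightarrow> bool) \<Rightarrow> 'a set \<Rightarrow> 'a set \<Rightarrow> bool" where
  "doubly_resolves E S U \<longleftrightarrow> (\<forall>u\<in>U. \<forall>v\<in>U. u \<noteq> v \<longrightarrow>
     (\<exists>x\<in>S. \<exists>y\<in>S. int (gdist E u x) - int (gdist E v x) \<noteq> int (gdist E u y) - int (gdist E v y)))"

end

theory Submission
  imports Defs
begin

(*
  Fix a vertex x.  Along a metric ray u, the quantity d(u_k, x) - k never
  increases (consecutive vertices are adjacent) and is bounded below by -d(u_0, x)
  (triangle inequality through u_0), so it is eventually constant: from some index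
  on the ray moves away from x at unit speed.  Taking the largest such index over
  the finitely many x in S shows that i(P,S) is attained, i.e. beyond u^P the ray P
  recedes from all of S simultaneously.

  Now suppose u^P, u^Q (P, Q distinct rays) are not doubly resolved, i.e.
  d(u^P, x) = d(u^Q, x) + c for all x in S and a fixed integer c, say c >= 0.  The
  vertex c steps beyond u^Q on Q then has the same distance vector to S as u^P,
  but lies on Q and hence differs from u^P, contradicting that S is resolving.
*)

lemma walk_sym:
  assumes "graph V E" and "(E ^^ n) x y"
  shows "(E ^^ n) y x"
  using assms(2)
proof (induction n arbitrary: x y)
  case 0
  then show ?case by simp
next
  case (Suc n)
  from Suc.prems obtain w where "(E ^^ n) x w" "E w y" by (rule relpowp_Suc_E)
  then have "E y w" "(E ^^ n) w x" using assms(1) Suc.IH unfolding graph_def by auto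
  then show ?case by (rule relpowp_Suc_I2)
qed

lemma gdist_walk:
  assumes "connected_graph V E" and "x \<in> V" and "y \<in> V"
  shows "(E ^^ gdist E x y) x y"
  using assms unfolding gdist_def connected_graph_def by (meson LeastI_ex)

lemma gdist_le_walk: "(E ^^ n) x y \<Longrightarrow> gdist E x y \<le> n"
  unfolding gdist_def by (rule Least_le)

lemma gdist_adjacent: "E a b \<Longrightarrow> gdist E a b \<le> 1"
  using gdist_le_walk[of 1 E a b] by (simp only: relpowp_1)

lemma gdist_triangle:
  assumes "connected_graph V E" and "x \<in> V" and "y \<in> V" and "z \<in> V"
  shows "gdist E x z \<le> gdist E x y + gdist E y z"
proof -
  have "(E ^^ (gdist E x y + gdist E y z)) x z"
    using gdist_walk[OF assms(1)] assms(2-4) unfolding relpowp_add by blast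
  then show ?thesis by (rule gdist_le_walk)
qed

lemma gdist_sym:
  assumes "graph V E" and "connected_graph V E" and "x \<in> V" and "y \<in> V"
  shows "gdist E x y = gdist E y x"
  using assms by (meson antisym gdist_le_walk gdist_walk walk_sym)

lemma metric_ray_in_V: "graph V E \<Longrightarrow> metric_ray E u \<Longrightarrow> u k \<in> V"
  unfolding graph_def metric_ray_def by blast

definition recedes_from :: "('a \<Rightarrow> 'a \<Rightarrow> bool) \<Rightarrow> (nat \<Rightarrow> 'a) \<Rightarrow> 'a set \<Rightarrow> nat \<Rightarrow> bool" where
  "recedes_from E u S i \<longleftrightarrow> (\<forall>k. \<forall>x\<in>S. gdist E (u (i + k)) x = gdist E (u i) x + k)"

lemma ray_index_Least: "ray_index E u S = (LEAST i. recedes_from E u S i)"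
  unfolding ray_index_def recedes_from_def ..

lemma recedes_from_mono:
  assumes "recedes_from E u S i" and "i \<le> j"
  shows "recedes_from E u S j"
  unfolding recedes_from_def
proof (intro allI ballI)
  fix k x assume "x \<in> S"
  obtain d where j: "j = i + d" using assms(2) le_Suc_ex by blast
  have "gdist E (u (j + k)) x = gdist E (u i) x + (d + k)"
    using assms(1) \<open>x \<in> S\<close> unfolding recedes_from_def j by (metis add.assoc)
  moreover have "gdist E (u j) x = gdist E (u i) x + d"
    using assms(1) \<open>x \<in> S\<close> unfolding recedes_from_def j by blast
  ultimately show "gdist E (u (j + k)) x = gdist E (u j) x + k" by simp
qed

lemma antimono_bounded_eventually_const:
  fixes f :: "nat \<Rightarrow> int"
  assumes dec: "\<And>k. f (Suc k) \<le> f k" and bound: "\<And>k. b \<le> f k"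
  shows "\<exists>k0. \<forall>k. f (k0 + k) = f k0"
proof -
  obtain k0 where min: "\<forall>k. nat (f k0 - b) \<le> nat (f k - b)"
    using ex_has_least_nat[of "\<lambda>_. True" 0 "\<lambda>k. nat (f k - b)"] by blast
  have "f (k0 + k) = f k0" for k
    using min[rule_format, of "k0 + k"] bound[of k0] bound[of "k0 + k"]
      lift_Suc_antimono_le[of f k0 "k0 + k", OF dec] by linarith
  then show ?thesis by blast
qed

text \<open>A metric ray eventually recedes from any single vertex x: the quantity
  d(u_k, x) - k is non-increasing and bounded below by -d(u_0, x).\<close>
lemma metric_ray_recedes_from_vertex:
  assumes g: "graph V E" and c: "connected_graph V E" and r: "metric_ray E u" and x: "x \<in> V"
  shows "\<exists>i. recedes_from E u {x} i"
proof -
  have uV: "\<And>k. u k \<in> V" using metric_ray_in_V g r by blast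
  define f where "f k = int (gdist E (u k) x) - int k" for k
  have "f (Suc k) \<le> f k" for k
  proof -
    have "gdist E (u (Suc k)) (u k) \<le> 1"
      using r gdist_adjacent gdist_sym[OF g c uV uV] unfolding metric_ray_def by metis
    then have "gdist E (u (Suc k)) x \<le> 1 + gdist E (u k) x"
      using gdist_triangle[OF c uV uV x, of "Suc k" k] by linarith
    then show ?thesis unfolding f_def by simp
  qed
  moreover have "- int (gdist E (u 0) x) \<le> f k" for k
  proof -
    have "k = gdist E (u 0) (u k)" using r unfolding metric_ray_def by simp
    also have "\<dots> \<le> gdist E (u 0) x + gdist E x (u k)" using gdist_triangle[OF c uV x uV] .
    also have "gdist E x (u k) = gdist E (u k) x" using gdist_sym[OF g c x uV] .
    finally show ?thesis unfolding f_def by simp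
  qed
  ultimately obtain i where "\<forall>k. f (i + k) = f i"
    using antimono_bounded_eventually_const by blast
  then have "int (gdist E (u (i + k)) x) = int (gdist E (u i) x) + int k" for k
    unfolding f_def by (metis of_nat_add add_diff_cancel_right diff_diff_eq2 diff_eq_eq)
  then have "gdist E (u (i + k)) x = gdist E (u i) x + k" for k
    by (metis of_nat_add of_nat_eq_iff)
  then show ?thesis unfolding recedes_from_def by blast
qed

text \<open>For finite S the ray index is attained: beyond it the ray recedes from all of S.
  This justifies the remark "such an i0 always exists" in the definition of i(P,S).\<close>
lemma recedes_from_ray_index:
  assumes g: "graph V E" and c: "connected_graph V E" and r: "metric_ray E u"
    and S: "finite S" "S \<subseteq> V"
  shows "recedes_from E u S (ray_index E u S)"
proof -
  obtain f where f: "\<And>x. x \<in> S \<Longrightarrow> recedes_from E u {x} (f x)"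
    using metric_ray_recedes_from_vertex[OF g c r] S(2) by (metis subsetD)
  define i where "i = Max (insert 0 (f ` S))"
  have "recedes_from E u {x} i" if "x \<in> S" for x
    using recedes_from_mono[OF f[OF that]] S(1) that unfolding i_def by simp
  then have "recedes_from E u S i" unfolding recedes_from_def by blast
  then show ?thesis unfolding ray_index_Least by (rule LeastI)
qed

text \<open>If a vertex a off the ray Q has, on S, the distances of Q_i shifted by n, then
  Q_(i+n) has the same distance vector as a; so S cannot be resolving.\<close>
lemma shifted_distances_not_resolving:
  assumes g: "graph V E" and res: "resolving_set V E S"
    and r: "metric_ray E Q" and rec: "recedes_from E Q S i"
    and a: "a \<in> V" "a \<notin> range Q"
    and shift: "\<forall>x\<in>S. gdist E a x = gdist E (Q i) x + n"
  shows False
proof -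
  have "gdist E (Q (i + n)) x = gdist E a x" if "x \<in> S" for x
    using rec shift that unfolding recedes_from_def by simp
  moreover have "Q (i + n) \<in> V" using metric_ray_in_V[OF g r] .
  moreover have "Q (i + n) \<noteq> a" using a(2) by blast
  ultimately show False using res a(1) unfolding resolving_set_def by metis
qed

lemma receding_rays_doubly_resolved:
  assumes g: "graph V E" and res: "resolving_set V E S"
    and rP: "metric_ray E P" and recP: "recedes_from E P S i"
    and rQ: "metric_ray E Q" and recQ: "recedes_from E Q S j"
    and disj: "range P \<inter> range Q = {}"
  shows "\<exists>x\<in>S. \<exists>y\<in>S. int (gdist E (P i) x) - int (gdist E (Q j) x)
                      \<noteq> int (gdist E (P i) y) - int (gdist E (Q j) y)"
proof (rule ccontr)
  assume "\<not> ?thesis"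
  then have const: "\<forall>x\<in>S. \<forall>y\<in>S. int (gdist E (P i) x) - int (gdist E (Q j) x)
                                  = int (gdist E (P i) y) - int (gdist E (Q j) y)"
    by blast
  have PV: "P i \<in> V" and QV: "Q j \<in> V" using metric_ray_in_V[OF g] rP rQ by auto
  have "P i \<noteq> Q j" using disj by blast
  then obtain x0 where "x0 \<in> S" using res PV QV unfolding resolving_set_def by blast
  define c where "c = int (gdist E (P i) x0) - int (gdist E (Q j) x0)"
  have diff: "\<forall>x\<in>S. int (gdist E (P i) x) = int (gdist E (Q j) x) + c"
    using const \<open>x0 \<in> S\<close> unfolding c_def by fastforce
  show False
  proof (cases "0 \<le> c")
    case True
    have "\<forall>x\<in>S. gdist E (P i) x = gdist E (Q j) x + nat c" using diff True by force
    moreover have "P i \<notin> range Q" using disj by blast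
    ultimately show False
      using shifted_distances_not_resolving[OF g res rQ recQ PV] by blast
  next
    case False
    have "\<forall>x\<in>S. gdist E (Q j) x = gdist E (P i) x + nat (- c)" using diff False by force
    moreover have "Q j \<notin> range P" using disj by blast
    ultimately show False
      using shifted_distances_not_resolving[OF g res rP recP QV] by blast
  qed
qed

theorem lemma6:
  fixes V :: "'a set" and E :: "'a \<Rightarrow> 'a \<Rightarrow> bool" and S :: "'a set"
    and \<P> :: "(nat \<Rightarrow> 'a) set"
  assumes "graph V E" and "infinite V" and "connected_graph V E" and "locally_finite V E"
    and "finite S" and "resolving_set V E S"
    and "\<forall>P\<in>\<P>. metric_ray E P"
    and "\<forall>P\<in>\<P>. \<forall>Q\<in>\<P>. P \<noteq> Q \<longrightarrow> range P \<inter> range Q = {}"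
  shows "doubly_resolves E S {P (ray_index E P S) | P. P \<in> \<P>}"
  unfolding doubly_resolves_def
proof (intro ballI impI)
  fix a b assume "a \<in> {P (ray_index E P S) | P. P \<in> \<P>}" "b \<in> {P (ray_index E P S) | P. P \<in> \<P>}"
    and "a \<noteq> b"
  then obtain P Q where P: "P \<in> \<P>" "a = P (ray_index E P S)"
    and Q: "Q \<in> \<P>" "b = Q (ray_index E Q S)" and "P \<noteq> Q"
    by blast
  have SV: "S \<subseteq> V" using assms(6) unfolding resolving_set_def by blast
  have rays: "metric_ray E P" "metric_ray E Q" using assms(7) P Q by auto
  show "\<exists>x\<in>S. \<exists>y\<in>S. int (gdist E a x) - int (gdist E b x) \<noteq> int (gdist E a y) - int (gdist E b y)"
    unfolding P(2) Q(2)
    using receding_rays_doubly_resolved[OF assms(1,6) rays(1) _ rays(2)]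
      recedes_from_ray_index[OF assms(1,3) _ assms(5) SV] rays assms(8) P(1) Q(1) \<open>P \<noteq> Q\<close>
    by blast
qed

end
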